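(* There exists a constant $c>0$ such that, for every positive integer $L \geq 1$, \[ \mathbb{P}_{L^{1/2}}[r_{L} < 8 L] \leq c\,L\,e^{-L^{1/2}/c}. \]
   Context: Let $d\ge1$, $\{e_i\}$ the canonical basis of $\mathbb{Z}^d$, and $p(\cdot)$ a nearest-neighbour probability distribution on $\mathbb{Z}^d$ (supported on $\{\pm e_i\}$) with $0<p(e_i)\le p(-e_i)<1$ for all $i$. Under $\mathbb{P}_\rho$ (here $\rho=L^{1/2}$), each site initially holds i.i.d. $\mathrm{Poisson}(\rho)$ particles which move as independent continuous-time random walks jumping at rate $1$ with increment law $p$. Infection: at time $0$ an additional infected particle is placed at the origin and the particles at the origin are infected; a healthy particle becomes infected instantaneously when it shares a site with an infected particle; no recovery. $\xi_t(x)$ is the number of infected particles at $x$ at time $t$ and $r_t=\sup\{\langle x,e_1\rangle:\xi_t(x)>0\}$. *)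

theory Defs
  imports "HOL-Probability.Probability"
begin

(* Particle labels: Some (x,k) = k-th particle initially at site x (present iff k < N x);
   None = the additional infected particle placed at the origin. *)
type_synonym 'd label = "((int^'d) \<times> nat) option"

(* Sources of randomness: Poisson occupation numbers, exponential waiting times, jump increments *)
datatype ('d::finite) src = SN "int^'d" | SE "'d label" nat | SJ "'d label" nat

definition jump_prob :: "('d::finite \<Rightarrow> real) \<Rightarrow> ('d \<Rightarrow> real) \<Rightarrow> int^'d \<Rightarrow> real" where
  "jump_prob pp pm z = (\<Sum>i\<in>UNIV. (if z = axis i 1 then pp i else 0) + (if z = axis i (-1) then pm i else 0))"

(* time of the (n+1)-th jump of the walk of particle l *)
definition jump_time :: "('d label \<Rightarrow> nat \<Rightarrow> 'a \<Rightarrow> real) \<Rightarrow> 'd label \<Rightarrow> nat \<Rightarrow> 'a \<Rightarrow> real" where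
  "jump_time E l n \<omega> = (\<Sum>m\<le>n. E l m \<omega>)"

definition start :: "('d::finite) label \<Rightarrow> int^'d" where
  "start l = (case l of None \<Rightarrow> 0 | Some (x, k) \<Rightarrow> x)"

definition pos :: "('d::finite label \<Rightarrow> nat \<Rightarrow> 'a \<Rightarrow> real) \<Rightarrow> ('d label \<Rightarrow> nat \<Rightarrow> 'a \<Rightarrow> int^'d)
    \<Rightarrow> 'a \<Rightarrow> 'd label \<Rightarrow> real \<Rightarrow> int^'d" where
  "pos E J \<omega> l t = start l + (\<Sum>n\<in>{n. jump_time E l n \<omega> \<le> t}. J l n \<omega>)"

definition present :: "(int^'d \<Rightarrow> 'a \<Rightarrow> nat) \<Rightarrow> 'a \<Rightarrow> ('d::finite) label \<Rightarrow> bool" where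
  "present N \<omega> l = (case l of None \<Rightarrow> True | Some (x, k) \<Rightarrow> k < N x \<omega>)"

definition init_inf :: "(int^'d \<Rightarrow> 'a \<Rightarrow> nat) \<Rightarrow> 'a \<Rightarrow> ('d::finite) label \<Rightarrow> bool" where
  "init_inf N \<omega> l = (case l of None \<Rightarrow> True | Some (x, k) \<Rightarrow> x = 0 \<and> k < N x \<omega>)"

(* infected pr ps ini t j : particle j is infected by time t (instantaneous infection, no recovery):
   there is a transmission chain from an initially infected particle. *)
inductive infected :: "('l \<Rightarrow> bool) \<Rightarrow> ('l \<Rightarrow> real \<Rightarrow> 'p) \<Rightarrow> ('l \<Rightarrow> bool) \<Rightarrow> real \<Rightarrow> 'l \<Rightarrow> bool"
  for pr ps ini where
  init: "ini j \<Longrightarrow> 0 \<le> t \<Longrightarrow> infected pr ps ini t j"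
| spread: "infected pr ps ini s i \<Longrightarrow> s \<le> u \<Longrightarrow> u \<le> t \<Longrightarrow> pr j \<Longrightarrow> ps i u = ps j u
           \<Longrightarrow> infected pr ps ini t j"

definition ecount :: "'b set \<Rightarrow> enat" where
  "ecount S = (if finite S then enat (card S) else \<infinity>)"

definition xi :: "(int^'d \<Rightarrow> 'a \<Rightarrow> nat) \<Rightarrow> ('d::finite label \<Rightarrow> nat \<Rightarrow> 'a \<Rightarrow> real)
    \<Rightarrow> ('d label \<Rightarrow> nat \<Rightarrow> 'a \<Rightarrow> int^'d) \<Rightarrow> real \<Rightarrow> 'a \<Rightarrow> int^'d \<Rightarrow> enat" where
  "xi N E J t \<omega> x = ecount {j. present N \<omega> j \<and>
      infected (present N \<omega>) (pos E J \<omega>) (init_inf N \<omega>) t j \<and> pos E J \<omega> j t = x}"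

definition rfront :: "'d \<Rightarrow> (int^'d \<Rightarrow> 'a \<Rightarrow> nat) \<Rightarrow> ('d::finite label \<Rightarrow> nat \<Rightarrow> 'a \<Rightarrow> real)
    \<Rightarrow> ('d label \<Rightarrow> nat \<Rightarrow> 'a \<Rightarrow> int^'d) \<Rightarrow> real \<Rightarrow> 'a \<Rightarrow> ereal" where
  "rfront i0 N E J t \<omega> = Sup {ereal (real_of_int (x $ i0)) | x. xi N E J t \<omega> x > 0}"

definition src_events :: "'a measure \<Rightarrow> (int^'d \<Rightarrow> 'a \<Rightarrow> nat) \<Rightarrow> ('d::finite label \<Rightarrow> nat \<Rightarrow> 'a \<Rightarrow> real)
    \<Rightarrow> ('d label \<Rightarrow> nat \<Rightarrow> 'a \<Rightarrow> int^'d) \<Rightarrow> 'd src \<Rightarrow> 'a set set" where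
  "src_events M N E J s = (case s of
      SN x \<Rightarrow> {N x -` A \<inter> space M | A. A \<in> sets (count_space UNIV)}
    | SE l n \<Rightarrow> {E l n -` A \<inter> space M | A. A \<in> sets borel}
    | SJ l n \<Rightarrow> {J l n -` A \<inter> space M | A. A \<in> sets (count_space UNIV)})"

definition frog_model :: "'a measure \<Rightarrow> ('d::finite \<Rightarrow> real) \<Rightarrow> ('d \<Rightarrow> real) \<Rightarrow> real
    \<Rightarrow> (int^'d \<Rightarrow> 'a \<Rightarrow> nat) \<Rightarrow> ('d label \<Rightarrow> nat \<Rightarrow> 'a \<Rightarrow> real)
    \<Rightarrow> ('d label \<Rightarrow> nat \<Rightarrow> 'a \<Rightarrow> int^'d) \<Rightarrow> bool" where
  "frog_model M pp pm rho N E J \<longleftrightarrow>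
     prob_space M \<and>
     (\<forall>x. N x \<in> measurable M (count_space UNIV) \<and>
          (\<forall>k. measure M {\<omega>\<in>space M. N x \<omega> = k} = pmf (poisson_pmf rho) k)) \<and>
     (\<forall>l n. distributed M lborel (E l n) (exponential_density 1)) \<and>
     (\<forall>l n. J l n \<in> measurable M (count_space UNIV) \<and>
          (\<forall>z. measure M {\<omega>\<in>space M. J l n \<omega> = z} = jump_prob pp pm z)) \<and>
     prob_space.indep_sets M (src_events M N E J) UNIV"

end

theory Submission
  imports Defs
begin

text \<open>Cut time into slots of length 1/10. A particle that sits at the site m e_i0 from time m/10 on,
steps by e_i0 during the time window ((m+1)/10, (m+2)/10] and then rests for more than 1/5
meets, at the moment of its step, the particle doing the same from (m+1) e_i0 one slot later.
A chain of such relay particles, one per slot, therefore carries the infection from the origin to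
distance 10L - 2 >= 8L by time L.

By memorylessness of the exponential clocks, a single walk performs the relay move of a slot
(from wherever it starts) with probability at least kappa/2, where
kappa = (exp(-1/10) - exp(-1/5)) p(e_i0) exp(-1/5) does not depend on the slot. The walks starting
at a site are a Poisson(rho) family of independent copies, so by Poisson thinning no particle at all
performs the relay move of a given slot with probability at most exp(-rho kappa/4). A union bound
over the 10L - 2 slots gives the claim for rho = sqrt L.\<close>

lemma Int_stable_vimage: "Int_stable {f -` A \<inter> space M | A. A \<in> sets N}"
  unfolding Int_stable_def
proof safe
  fix A B assume "A \<in> sets N" "B \<in> sets N"
  then show "\<exists>C. (f -` A \<inter> space M) \<inter> (f -` B \<inter> space M) = f -` C \<inter> space M \<and> C \<in> sets N"
    by (intro exI[of _ "A \<inter> B"]) auto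
qed

lemma poisson_pmf_generating_function:
  assumes "0 < rho"
  shows "(\<lambda>j. pmf (poisson_pmf rho) j * z ^ j) sums exp (rho * (z - 1))"
proof -
  have "(\<lambda>j. (rho * z) ^ j / fact j) sums exp (rho * z)"
    using exp_converges[of "rho * z"] by (simp add: divide_inverse mult.commute)
  then have "(\<lambda>j. exp (- rho) * ((rho * z) ^ j / fact j)) sums (exp (- rho) * exp (rho * z))"
    by (rule sums_mult)
  moreover have "exp (- rho) * exp (rho * z) = exp (rho * (z - 1))"
    by (simp add: exp_add[symmetric] algebra_simps)
  ultimately show ?thesis
    using assms by (simp add: power_mult_distrib mult_ac)
qed

lemma (in finite_measure) finite_subfamily_measure_gt:
  assumes I: "countable I" and H: "\<And>i. i \<in> I \<Longrightarrow> H i \<in> sets M"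
    and c: "c < measure M (\<Union>i\<in>I. H i)"
  shows "\<exists>F\<subseteq>I. finite F \<and> c < measure M (\<Union>i\<in>F. H i)"
proof (cases "I = {}")
  case True
  then show ?thesis using c by auto
next
  case False
  define F where "F n = from_nat_into I ` {..<n}" for n
  have F: "F n \<subseteq> I" "finite (F n)" for n
    using from_nat_into[OF False] by (auto simp: F_def)
  have "incseq F"
    by (auto simp: incseq_def F_def)
  then have "incseq (\<lambda>n. \<Union>i\<in>F n. H i)"
    by (auto simp: incseq_def)
  then have "(\<lambda>n. measure M (\<Union>i\<in>F n. H i)) \<longlonglongrightarrow> measure M (\<Union>n. \<Union>i\<in>F n. H i)"
    using F H by (intro finite_Lim_measure_incseq sets.finite_UN) blast+
  moreover have "(\<Union>n. \<Union>i\<in>F n. H i) = (\<Union>i\<in>I. H i)"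
  proof -
    have "(\<Union>n. F n) = range (from_nat_into I)"
    proof (intro equalityI subsetI)
      fix i assume "i \<in> range (from_nat_into I)"
      then obtain k where "i = from_nat_into I k" by blast
      then show "i \<in> (\<Union>n. F n)" by (intro UN_I[of "Suc k"]) (auto simp: F_def)
    qed (unfold F_def, blast)
    then have "(\<Union>n. F n) = I" using range_from_nat_into[OF False I] by simp
    have "(\<Union>n. \<Union>i\<in>F n. H i) = (\<Union>i\<in>(\<Union>n. F n). H i)" by blast
    also have "\<dots> = (\<Union>i\<in>I. H i)" using \<open>(\<Union>n. F n) = I\<close> by simp
    finally show ?thesis .
  qed
  ultimately have "eventually (\<lambda>n. c < measure M (\<Union>i\<in>F n. H i)) sequentially"
    using c by (auto intro: order_tendstoD(1))
  then obtain n where "c < measure M (\<Union>i\<in>F n. H i)"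
    by (meson eventually_sequentially order_refl)
  then show ?thesis using F by blast
qed

lemma disjoint_family_first_exceeding:
  fixes f :: "'a \<Rightarrow> nat \<Rightarrow> 'b::linorder"
  shows "disjoint_family (\<lambda>n. {x\<in>S. (\<forall>k<n. f x k \<le> a) \<and> a < f x n})"
proof (unfold disjoint_family_on_def, intro ballI impI)
  fix m n :: nat assume "m \<noteq> n"
  then consider "m < n" | "n < m" by linarith
  then show "{x\<in>S. (\<forall>k<m. f x k \<le> a) \<and> a < f x m} \<inter> {x\<in>S. (\<forall>k<n. f x k \<le> a) \<and> a < f x n} = {}"
    by cases (auto dest: leD)
qed

lemma UN_first_exceeding:
  fixes f :: "'a \<Rightarrow> nat \<Rightarrow> 'b::linorder"
  shows "(\<Union>n\<in>{..m}. {x\<in>S. (\<forall>k<n. f x k \<le> a) \<and> a < f x n}) = {x\<in>S. \<exists>k\<le>m. a < f x k}"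
proof (intro equalityI subsetI)
  fix x assume x: "x \<in> {x\<in>S. \<exists>k\<le>m. a < f x k}"
  then have ex: "\<exists>k. k \<le> m \<and> a < f x k" by auto
  define n where "n = (LEAST k. k \<le> m \<and> a < f x k)"
  have n: "n \<le> m \<and> a < f x n"
    unfolding n_def using ex by (rule LeastI_ex)
  moreover have "f x k \<le> a" if "k < n" for k
    using not_less_Least[OF that[unfolded n_def]] n that by auto
  ultimately show "x \<in> (\<Union>n\<in>{..m}. {x\<in>S. (\<forall>k<n. f x k \<le> a) \<and> a < f x n})" using x by auto
qed auto

lemma (in prob_space) emeasure_indep_var_pair:
  assumes XY: "indep_var S X T Y" and A: "A \<in> sets (S \<Otimes>\<^sub>M T)"
  shows "emeasure M {\<omega>\<in>space M. (X \<omega>, Y \<omega>) \<in> A} =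
    (\<integral>\<^sup>+x. emeasure (distr M T Y) (Pair x -` A) \<partial>distr M S X)"
proof -
  have joint: "distr M S X \<Otimes>\<^sub>M distr M T Y = distr M (S \<Otimes>\<^sub>M T) (\<lambda>\<omega>. (X \<omega>, Y \<omega>))"
    and X: "random_variable S X" and Y: "random_variable T Y"
    using XY indep_var_distribution_eq by blast+
  interpret DY: prob_space "distr M T Y" using Y by (rule prob_space_distr)
  have "emeasure M {\<omega>\<in>space M. (X \<omega>, Y \<omega>) \<in> A} = emeasure (distr M (S \<Otimes>\<^sub>M T) (\<lambda>\<omega>. (X \<omega>, Y \<omega>))) A"
    using X Y A by (subst emeasure_distr) (auto intro!: arg_cong[where f="emeasure M"])
  also have "\<dots> = (\<integral>\<^sup>+x. emeasure (distr M T Y) (Pair x -` A) \<partial>distr M S X)"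
    using A by (simp add: joint[symmetric] DY.emeasure_pair_measure_alt)
  finally show ?thesis .
qed

lemma (in prob_space) prob_exponential_window:
  assumes X: "distributed M lborel X (exponential_density r)" and r: "0 < r"
    and u: "0 \<le> u" and st: "0 \<le> s" "s \<le> t"
  shows "prob {\<omega>\<in>space M. u + s < X \<omega> \<and> X \<omega> \<le> u + t} = exp (- u * r) * (exp (- s * r) - exp (- t * r))"
proof -
  have [measurable]: "X \<in> borel_measurable M"
    using distributed_measurable[OF X] by simp
  have tail: "prob {\<omega>\<in>space M. v < X \<omega>} = exp (- v * r)" if "0 \<le> v" for v
    using exponential_distributedD_gt[OF X that r] by simp
  have "{\<omega>\<in>space M. u + s < X \<omega> \<and> X \<omega> \<le> u + t} =
      {\<omega>\<in>space M. u + s < X \<omega>} - {\<omega>\<in>space M. u + t < X \<omega>}" by auto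
  also have "prob \<dots> = prob {\<omega>\<in>space M. u + s < X \<omega>} - prob {\<omega>\<in>space M. u + t < X \<omega>}"
    using st by (intro finite_measure_Diff) (auto simp: subset_eq)
  also have "\<dots> = exp (- (u + s) * r) - exp (- (u + t) * r)"
    using u st by (simp add: tail)
  also have "\<dots> = exp (- u * r) * (exp (- s * r) - exp (- t * r))"
    unfolding right_diff_distrib exp_add[symmetric] by (simp add: algebra_simps)
  finally show ?thesis .
qed

lemma (in prob_space) prob_exponential_window_after_indep:
  assumes X: "distributed M lborel X (exponential_density r)" and r: "0 < r"
    and UX: "indep_var borel U borel X" and st: "0 \<le> s" "s \<le> t"
  shows "prob {\<omega>\<in>space M. 0 \<le> U \<omega> \<and> U \<omega> + s < X \<omega> \<and> X \<omega> \<le> U \<omega> + t}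
       = (exp (- s * r) - exp (- t * r)) * prob {\<omega>\<in>space M. 0 \<le> U \<omega> \<and> U \<omega> < X \<omega>}"
proof -
  define C where "C = exp (- s * r) - exp (- t * r)"
  have C: "0 \<le> C" using st r by (simp add: C_def mult_right_mono)
  have [measurable]: "X \<in> borel_measurable M" using UX by (rule indep_var_rv2)
  define SA where "SA = {p::real \<times> real. 0 \<le> fst p \<and> fst p + s < snd p \<and> snd p \<le> fst p + t}"
  define SB where "SB = {p::real \<times> real. 0 \<le> fst p \<and> fst p < snd p}"
  have "Measurable.pred (borel \<Otimes>\<^sub>M borel) (\<lambda>p::real \<times> real. 0 \<le> fst p \<and> fst p + s < snd p \<and> snd p \<le> fst p + t)"
    by measurable
  then have SA: "SA \<in> sets (borel \<Otimes>\<^sub>M borel)" by (simp add: SA_def pred_def space_pair_measure)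
  have "Measurable.pred (borel \<Otimes>\<^sub>M borel) (\<lambda>p::real \<times> real. 0 \<le> fst p \<and> fst p < snd p)"
    by measurable
  then have SB: "SB \<in> sets (borel \<Otimes>\<^sub>M borel)" by (simp add: SB_def pred_def space_pair_measure)
  have emeasure_X: "emeasure (distr M borel X) B = emeasure M {\<omega>\<in>space M. X \<omega> \<in> B}"
    if "B \<in> sets borel" for B
    using that by (subst emeasure_distr) (auto intro!: arg_cong[where f="emeasure M"])
  have section_SA: "emeasure (distr M borel X) (Pair u -` SA) =
      ennreal C * (if 0 \<le> u then ennreal (exp (- u * r)) else 0)" for u
  proof (cases "0 \<le> u")
    case True
    have "Pair u -` SA = {v. u + s < v \<and> v \<le> u + t}" using True by (auto simp: SA_def)
    then show ?thesis
      using True C prob_exponential_window[OF X r True st]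
      by (simp add: emeasure_X emeasure_eq_measure ennreal_mult C_def mult.commute)
  qed (auto simp: SA_def)
  have section_SB: "emeasure (distr M borel X) (Pair u -` SB) = (if 0 \<le> u then ennreal (exp (- u * r)) else 0)"
    for u
  proof (cases "0 \<le> u")
    case True
    have "Pair u -` SB = {v. u < v}" using True by (auto simp: SB_def)
    then show ?thesis
      using True exponential_distributedD_gt[OF X True r] by (simp add: emeasure_X emeasure_eq_measure)
  qed (auto simp: SB_def)
  have "emeasure M {\<omega>\<in>space M. (U \<omega>, X \<omega>) \<in> SA}
      = ennreal C * (\<integral>\<^sup>+u. (if 0 \<le> u then ennreal (exp (- u * r)) else 0) \<partial>distr M borel U)"
    by (simp add: emeasure_indep_var_pair[OF UX SA] section_SA nn_integral_cmult)
  also have "\<dots> = ennreal C * emeasure M {\<omega>\<in>space M. (U \<omega>, X \<omega>) \<in> SB}"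
    by (simp add: emeasure_indep_var_pair[OF UX SB] section_SB)
  finally have "prob {\<omega>\<in>space M. (U \<omega>, X \<omega>) \<in> SA} = C * prob {\<omega>\<in>space M. (U \<omega>, X \<omega>) \<in> SB}"
    using C by (simp add: measure_def enn2real_mult)
  then show ?thesis by (simp add: SA_def SB_def C_def)
qed

section \<open>Walk paths and relay moves\<close>

definition walk :: "('l \<Rightarrow> nat \<Rightarrow> 'a \<Rightarrow> real) \<Rightarrow> ('l \<Rightarrow> nat \<Rightarrow> 'a \<Rightarrow> 'p) \<Rightarrow> 'l \<Rightarrow> 'a \<Rightarrow> nat \<Rightarrow> real \<times> 'p"
  where "walk E J l \<omega> n = (E l n \<omega>, J l n \<omega>)"

definition hold :: "(nat \<Rightarrow> real \<times> 'p) \<Rightarrow> nat \<Rightarrow> real" where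
  "hold w n = fst (w n)"

definition jump :: "(nat \<Rightarrow> real \<times> 'p) \<Rightarrow> nat \<Rightarrow> 'p" where
  "jump w n = snd (w n)"

definition arrival :: "(nat \<Rightarrow> real \<times> 'p) \<Rightarrow> nat \<Rightarrow> real" where
  "arrival w n = (\<Sum>j\<le>n. hold w j)"

lemma hold_walk[simp]: "hold (walk E J l \<omega>) n = E l n \<omega>"
  by (simp add: hold_def walk_def)

lemma jump_walk[simp]: "jump (walk E J l \<omega>) n = J l n \<omega>"
  by (simp add: jump_def walk_def)

lemma arrival_walk[simp]: "arrival (walk E J l \<omega>) n = jump_time E l n \<omega>"
  by (simp add: arrival_def jump_time_def)

abbreviation path_space :: "(nat \<Rightarrow> real \<times> 'p) measure" where
  "path_space \<equiv> \<Pi>\<^sub>M n\<in>UNIV. borel \<Otimes>\<^sub>M count_space UNIV"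

definition walk_sources :: "('d::finite) label \<Rightarrow> 'd src set" where
  "walk_sources l = range (SE l) \<union> range (SJ l)"

definition site_sources :: "int^'d::finite \<Rightarrow> 'd src set" where
  "site_sources y = insert (SN y) (\<Union>k. walk_sources (Some (y, k)))"

definition relay_at :: "'p \<Rightarrow> real \<Rightarrow> (nat \<Rightarrow> real \<times> 'p) \<Rightarrow> nat \<Rightarrow> bool" where
  "relay_at e a w n \<longleftrightarrow> (\<forall>k<n. arrival w k \<le> a) \<and> a + 1/10 < arrival w n \<and> arrival w n \<le> a + 1/5
    \<and> jump w n = e \<and> 1/5 < hold w (Suc n)"

text \<open>In relays e a z w, z is the displacement of the walk from its start between time a and its first
jump after a. With a = m/10, the relay of slot m steps onto the site where the relay of slot m + 1
is waiting.\<close>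

definition relays :: "'p::comm_monoid_add \<Rightarrow> real \<Rightarrow> 'p \<Rightarrow> (nat \<Rightarrow> real \<times> 'p) \<Rightarrow> bool" where
  "relays e a z w \<longleftrightarrow> (\<forall>j. 0 < hold w j) \<and> (\<exists>n. relay_at e a w n \<and> (\<Sum>j<n. jump w j) = z)"

lemma hold_measurable[measurable]: "(\<lambda>w. hold w n) \<in> borel_measurable path_space"
  unfolding hold_def by measurable

lemma jump_measurable[measurable]:
  "(\<lambda>w. jump w n) \<in> measurable path_space (count_space (UNIV :: 'p::countable set))"
  unfolding jump_def by measurable

lemma arrival_measurable[measurable]: "(\<lambda>w. arrival w n) \<in> borel_measurable path_space"
  unfolding arrival_def by measurable

lemma jump_sum_measurable[measurable]:
  "(\<lambda>w. \<Sum>j<n. jump w j) \<in> measurable path_space (count_space (UNIV :: 'p::{countable, comm_monoid_add} set))"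
proof (induction n)
  case (Suc n)
  have "(\<lambda>w. (\<lambda>z w. z + jump w n) (\<Sum>j<n. jump w j) w) \<in> measurable path_space (count_space (UNIV :: 'p set))"
    by (rule measurable_compose_countable[OF _ Suc.IH]) simp
  then show ?case by simp
qed simp

lemma relay_at_measurable[measurable]:
  "Measurable.pred path_space (\<lambda>w. relay_at (e :: 'p::countable) a w n)"
  unfolding relay_at_def by measurable

lemma relays_measurable[measurable]:
  "Measurable.pred path_space (relays e a (z :: 'p::{countable, comm_monoid_add}))"
  unfolding relays_def relay_at_def by measurable

lemma jump_prob_axis: "jump_prob pp pm (axis i0 1) = pp i0"
proof -
  have "jump_prob pp pm (axis i0 1) = (\<Sum>i\<in>UNIV. if i0 = i then pp i else 0)"
    unfolding jump_prob_def by (intro sum.cong) (auto simp: axis_eq_axis)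
  then show ?thesis by simp
qed

definition relay_const :: "real \<Rightarrow> real" where
  "relay_const p = (exp (- 1/10) - exp (- 1/5)) * p * exp (- 1/5)"

section \<open>Propagation of the infection along a chain of relays\<close>

lemma relays_time_zero:
  assumes "relays e 0 z w"
  shows "z = 0"
proof -
  obtain n where pos: "\<forall>j. 0 < hold w j" and R: "relay_at e 0 w n" and z: "(\<Sum>j<n. jump w j) = z"
    using assms by (auto simp: relays_def)
  have "n = 0"
  proof (rule ccontr)
    assume "n \<noteq> 0"
    then have "arrival w 0 \<le> 0" using R by (auto simp: relay_at_def)
    then show False using pos[rule_format, of 0] by (simp add: arrival_def)
  qed
  then show ?thesis using z by simp
qed

lemma jump_time_mono:
  assumes "\<And>j. 0 \<le> E l j \<omega>" "i \<le> k"
  shows "jump_time E l i \<omega> \<le> jump_time E l k \<omega>"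
  unfolding jump_time_def using assms by (intro sum_mono2) auto

lemma pos_eq_before_jump:
  assumes nonneg: "\<And>j. 0 \<le> E l j \<omega>"
    and "\<forall>k<n. jump_time E l k \<omega> \<le> t" "t < jump_time E l n \<omega>"
  shows "pos E J \<omega> l t = start l + (\<Sum>j<n. J l j \<omega>)"
proof -
  have "{j. jump_time E l j \<omega> \<le> t} = {..<n}"
  proof (intro set_eqI iffI)
    fix j assume "j \<in> {j. jump_time E l j \<omega> \<le> t}"
    then show "j \<in> {..<n}"
      using jump_time_mono[of E l \<omega> n j] nonneg assms(3) by (cases "n \<le> j") auto
  qed (use assms in auto)
  then show ?thesis by (simp add: pos_def)
qed

lemma relays_positions:
  fixes x e :: "int^'d::finite"
  assumes "relays e a (x - start l) (walk E J l \<omega>)"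
  obtains \<tau> where "a + 1/10 < \<tau>" "\<tau> \<le> a + 1/5"
    "\<And>t. a \<le> t \<Longrightarrow> t < \<tau> \<Longrightarrow> pos E J \<omega> l t = x"
    "\<And>t. \<tau> \<le> t \<Longrightarrow> t \<le> \<tau> + 1/5 \<Longrightarrow> pos E J \<omega> l t = x + e"
proof -
  obtain n where E_pos: "\<And>j. 0 < E l j \<omega>" and R: "relay_at e a (walk E J l \<omega>) n"
    and disp: "start l + (\<Sum>j<n. J l j \<omega>) = x"
    using assms by (auto simp: relays_def)
  have nonneg: "0 \<le> E l j \<omega>" for j using E_pos[of j] by simp
  define \<tau> where "\<tau> = jump_time E l n \<omega>"
  have before: "\<forall>k<n. jump_time E l k \<omega> \<le> a" and \<tau>: "a + 1/10 < \<tau>" "\<tau> \<le> a + 1/5"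
    and e: "J l n \<omega> = e" and wait: "1/5 < E l (Suc n) \<omega>"
    using R by (auto simp: relay_at_def \<tau>_def)
  show ?thesis
  proof (rule that[OF \<tau>])
    fix t assume "a \<le> t" "t < \<tau>"
    then show "pos E J \<omega> l t = x"
      using before disp nonneg by (subst pos_eq_before_jump[of E l \<omega>]) (auto simp: \<tau>_def)
  next
    fix t assume t: "\<tau> \<le> t" "t \<le> \<tau> + 1/5"
    have "\<forall>k<Suc n. jump_time E l k \<omega> \<le> t"
      using before t \<tau> by (auto simp: \<tau>_def less_Suc_eq)
    moreover have "t < jump_time E l (Suc n) \<omega>"
      using t wait by (simp add: jump_time_def \<tau>_def)
    ultimately show "pos E J \<omega> l t = x + e"
      using disp e nonneg by (subst pos_eq_before_jump[of E l \<omega>]) (auto simp: add.assoc)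
  qed
qed

lemma ecount_pos: "j \<in> S \<Longrightarrow> 0 < ecount S"
  by (cases "finite S") (auto simp: ecount_def zero_enat_def card_gt_0_iff)

lemma infected_along_relay_chain:
  fixes l :: "nat \<Rightarrow> ('d::finite) label" and x :: "nat \<Rightarrow> int^'d"
  assumes first: "init_inf N \<omega> (l 0)" and present: "\<And>m. m < K \<Longrightarrow> present N \<omega> (l m)"
    and relay: "\<And>m. m < K \<Longrightarrow> relays e (real m / 10) (x m - start (l m)) (walk E J (l m) \<omega>)"
    and x_Suc: "\<And>m. x (Suc m) = x m + e"
  shows "m < K \<Longrightarrow> real (Suc m) / 10 \<le> T \<Longrightarrow> infected (present N \<omega>) (pos E J \<omega>) (init_inf N \<omega>) T (l m)"
proof (induction m arbitrary: T)
  case 0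
  then show ?case by (intro infected.init first) simp
next
  case (Suc m)
  have m: "m < K" using Suc.prems by simp
  obtain \<tau> where \<tau>: "real m / 10 + 1/10 < \<tau>" "\<tau> \<le> real m / 10 + 1/5"
    and "\<And>t. real m / 10 \<le> t \<Longrightarrow> t < \<tau> \<Longrightarrow> pos E J \<omega> (l m) t = x m"
    and stepped: "\<And>t. \<tau> \<le> t \<Longrightarrow> t \<le> \<tau> + 1/5 \<Longrightarrow> pos E J \<omega> (l m) t = x m + e"
    by (rule relays_positions[OF relay[OF m]]) blast
  obtain \<tau>' where "real (Suc m) / 10 + 1/10 < \<tau>'" "\<tau>' \<le> real (Suc m) / 10 + 1/5"
    and waiting: "\<And>t. real (Suc m) / 10 \<le> t \<Longrightarrow> t < \<tau>' \<Longrightarrow> pos E J \<omega> (l (Suc m)) t = x (Suc m)"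
    and "\<And>t. \<tau>' \<le> t \<Longrightarrow> t \<le> \<tau>' + 1/5 \<Longrightarrow> pos E J \<omega> (l (Suc m)) t = x (Suc m) + e"
    by (rule relays_positions[OF relay[OF Suc.prems(1)]]) blast
  then have "real (Suc m) / 10 \<le> \<tau>" "\<tau> < \<tau>'" using \<tau> by (auto simp: field_simps)
  show ?case
  proof (rule infected.spread)
    show "infected (present N \<omega>) (pos E J \<omega>) (init_inf N \<omega>) (real (Suc m) / 10) (l m)"
      by (rule Suc.IH[OF m]) simp
    show "real (Suc m) / 10 \<le> \<tau>" "\<tau> \<le> T" using \<tau> Suc.prems by (auto simp: field_simps)
    show "present N \<omega> (l (Suc m))" by (rule present[OF Suc.prems(1)])
    have "pos E J \<omega> (l m) \<tau> = x (Suc m)" using stepped[of \<tau>] x_Suc by simp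
    also have "\<dots> = pos E J \<omega> (l (Suc m)) \<tau>"
      using waiting \<open>real (Suc m) / 10 \<le> \<tau>\<close> \<open>\<tau> < \<tau>'\<close> by simp
    finally show "pos E J \<omega> (l m) \<tau> = pos E J \<omega> (l (Suc m)) \<tau>" .
  qed
qed

lemma rfront_ge_of_relay_chain:
  fixes i0 :: "'d::finite"
  assumes K: "0 < K"
    and relay: "\<And>m. m < K \<Longrightarrow> \<exists>y k. k < N y \<omega> \<and>
      relays (axis i0 1) (real m / 10) (axis i0 (int m) - y) (walk E J (Some (y, k)) \<omega>)"
  shows "ereal (real K) \<le> rfront i0 N E J ((real K + 2) / 10) \<omega>"
proof -
  define e :: "int^'d" where "e = axis i0 1"
  define x :: "nat \<Rightarrow> int^'d" where "x m = axis i0 (int m)" for m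
  have x_Suc: "x (Suc m) = x m + e" for m
    by (simp add: x_def e_def vec_eq_iff axis_def)
  obtain y k where yk: "\<And>m. m < K \<Longrightarrow> k m < N (y m) \<omega> \<and>
      relays e (real m / 10) (x m - y m) (walk E J (Some (y m, k m)) \<omega>)"
    using relay unfolding e_def x_def by metis
  define l where "l m = Some (y m, k m)" for m
  have present: "present N \<omega> (l m)" if "m < K" for m
    using yk[OF that] by (simp add: present_def l_def)
  have relay_l: "relays e (real m / 10) (x m - start (l m)) (walk E J (l m) \<omega>)" if "m < K" for m
    using yk[OF that] by (simp add: l_def start_def)
  have "x 0 - y 0 = 0" using yk[OF K] by (auto dest: relays_time_zero)
  moreover have "x 0 = 0" by (simp add: x_def axis_def vec_eq_iff)
  ultimately have first: "init_inf N \<omega> (l 0)" using yk[OF K] by (simp add: init_inf_def l_def)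
  define T where "T = (real K + 2) / 10"
  have last: "K - 1 < K" "Suc (K - 1) = K" using K by auto
  have infected: "infected (present N \<omega>) (pos E J \<omega>) (init_inf N \<omega>) T (l (K - 1))"
    using infected_along_relay_chain[where l=l and x=x and K=K and m="K - 1" and T=T,
        OF first present relay_l x_Suc last(1)]
    unfolding last(2) T_def by simp
  obtain \<tau> where \<tau>: "real (K - 1) / 10 + 1/10 < \<tau>" "\<tau> \<le> real (K - 1) / 10 + 1/5"
    and "\<And>t. real (K - 1) / 10 \<le> t \<Longrightarrow> t < \<tau> \<Longrightarrow> pos E J \<omega> (l (K - 1)) t = x (K - 1)"
    and stepped: "\<And>t. \<tau> \<le> t \<Longrightarrow> t \<le> \<tau> + 1/5 \<Longrightarrow> pos E J \<omega> (l (K - 1)) t = x (K - 1) + e"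
    by (rule relays_positions[OF relay_l[OF last(1)]]) blast
  have "\<tau> \<le> T" "T \<le> \<tau> + 1/5"
    using \<tau> K by (auto simp: T_def of_nat_diff field_simps)
  then have "pos E J \<omega> (l (K - 1)) T = x K"
    using stepped x_Suc[of "K - 1"] last(2) by simp
  then have "0 < xi N E J T \<omega> (x K)"
    unfolding xi_def using infected present[OF last(1)] by (intro ecount_pos[of "l (K - 1)"]) simp
  then have "ereal (real_of_int (x K $ i0)) \<le> rfront i0 N E J T \<omega>"
    unfolding rfront_def by (intro Sup_upper) blast
  then show ?thesis by (simp add: x_def T_def)
qed

section \<open>Independence in the frog model\<close>

locale frog =
  fixes M :: "'a measure" and pp pm :: "'d::finite \<Rightarrow> real" and rho :: real
    and N :: "int^'d \<Rightarrow> 'a \<Rightarrow> nat" and E :: "'d label \<Rightarrow> nat \<Rightarrow> 'a \<Rightarrow> real"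
    and J :: "'d label \<Rightarrow> nat \<Rightarrow> 'a \<Rightarrow> int^'d"
  assumes frog_model: "frog_model M pp pm rho N E J"
begin

sublocale prob_space M
  using frog_model by (simp add: frog_model_def)

lemma N_measurable[measurable]: "N y \<in> measurable M (count_space UNIV)"
  using frog_model by (simp add: frog_model_def)

lemma prob_N_eq: "0 < rho \<Longrightarrow> prob {\<omega>\<in>space M. N y \<omega> = j} = pmf (poisson_pmf rho) j"
  using frog_model by (simp add: frog_model_def)

lemma E_distributed: "distributed M lborel (E l n) (exponential_density 1)"
  using frog_model by (simp add: frog_model_def)

lemma E_measurable[measurable]: "E l n \<in> borel_measurable M"
  using distributed_measurable[OF E_distributed] by simp

lemma J_measurable[measurable]: "J l n \<in> measurable M (count_space UNIV)"
  using frog_model by (simp add: frog_model_def)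

lemma prob_J_eq: "prob {\<omega>\<in>space M. J l n \<omega> = z} = jump_prob pp pm z"
  using frog_model by (simp add: frog_model_def)

lemma jump_time_measurable: "(\<lambda>\<omega>. jump_time E l n \<omega>) \<in> borel_measurable M"
  unfolding jump_time_def by measurable

lemma AE_E_pos: "AE \<omega> in M. \<forall>j. 0 < E l j \<omega>"
proof -
  have "AE \<omega> in M. 0 < E l j \<omega>" for j
    using exponential_distributedD_gt[OF E_distributed order_refl, of l j]
    by (subst prob_Collect_eq_1[symmetric]) auto
  then show ?thesis by (simp add: AE_all_countable)
qed

definition source_sigma :: "'d src set \<Rightarrow> 'a measure" where
  "source_sigma B = sigma (space M) (\<Union>s\<in>B. src_events M N E J s)"

lemma src_events_subset: "src_events M N E J s \<subseteq> Pow (space M)"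
  by (cases s) (auto simp: src_events_def)

lemma space_source_sigma[simp]: "space (source_sigma B) = space M"
  unfolding source_sigma_def using src_events_subset by (subst space_measure_of) auto

lemma sets_source_sigma: "sets (source_sigma B) = sigma_sets (space M) (\<Union>s\<in>B. src_events M N E J s)"
  unfolding source_sigma_def using src_events_subset by (subst sets_measure_of) auto

lemma indep_sources: "indep_sets (src_events M N E J) UNIV"
  using frog_model by (simp add: frog_model_def)

lemma sets_source_sigma_subset: "sets (source_sigma B) \<subseteq> events"
  unfolding sets_source_sigma using indep_sources
  by (intro sigma_sets_le_sets_iff[THEN iffD2]) (auto simp: indep_sets_def)

lemma measurable_source_sigmaD: "f \<in> measurable (source_sigma B) S \<Longrightarrow> f \<in> measurable M S"
  using sets_source_sigma_subset[of B] by (auto simp: measurable_def)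

lemma N_measurable_source: "SN y \<in> B \<Longrightarrow> N y \<in> measurable (source_sigma B) (count_space UNIV)"
  unfolding measurable_def sets_source_sigma
  by (fastforce intro!: sigma_sets.Basic bexI[of _ "SN y"] simp: src_events_def)

lemma E_measurable_source: "SE l n \<in> B \<Longrightarrow> E l n \<in> borel_measurable (source_sigma B)"
  unfolding measurable_def sets_source_sigma
  by (fastforce intro!: sigma_sets.Basic bexI[of _ "SE l n"] simp: src_events_def)

lemma J_measurable_source: "SJ l n \<in> B \<Longrightarrow> J l n \<in> measurable (source_sigma B) (count_space UNIV)"
  unfolding measurable_def sets_source_sigma
  by (fastforce intro!: sigma_sets.Basic bexI[of _ "SJ l n"] simp: src_events_def)

lemma jump_time_measurable_source:
  "(\<And>j. j \<le> n \<Longrightarrow> SE l j \<in> B) \<Longrightarrow> (\<lambda>\<omega>. jump_time E l n \<omega>) \<in> borel_measurable (source_sigma B)"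
  unfolding jump_time_def by (intro borel_measurable_sum E_measurable_source) auto

lemma indep_sets_source_blocks:
  assumes "disjoint_family_on B I"
  shows "indep_sets (\<lambda>i. sets (source_sigma (B i))) I"
proof -
  have "Int_stable (src_events M N E J s)" for s
    using Int_stable_vimage[of "N _" M "count_space UNIV"] Int_stable_vimage[of "E _ _" M borel]
      Int_stable_vimage[of "J _ _" M "count_space UNIV"]
    by (cases s) (simp_all add: src_events_def)
  then show ?thesis
    unfolding sets_source_sigma
    using assms by (intro indep_sets_collect_sigma indep_sets_mono_index[OF _ indep_sources]) auto
qed

lemma prob_INT_source_blocks:
  assumes "disjoint_family_on B I" "finite I" "I \<noteq> {}"
    and "\<And>i. i \<in> I \<Longrightarrow> A i \<in> sets (source_sigma (B i))"
  shows "prob (\<Inter>i\<in>I. A i) = (\<Prod>i\<in>I. prob (A i))"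
  using assms by (intro indep_setsD[OF indep_sets_source_blocks]) auto

lemma sets_source_sigma_mono: "B \<subseteq> B' \<Longrightarrow> sets (source_sigma B) \<subseteq> sets (source_sigma B')"
  unfolding sets_source_sigma by (intro sigma_sets_subseteq) auto

lemma prob_Int_source_blocks:
  assumes "B1 \<inter> B2 = {}" "A1 \<in> sets (source_sigma B1)" "A2 \<in> sets (source_sigma B2)"
  shows "prob (A1 \<inter> A2) = prob A1 * prob A2"
  using prob_INT_source_blocks[where B="case_bool B1 B2" and A="case_bool A1 A2" and I=UNIV] assms
  by (simp add: disjoint_family_on_def UNIV_bool Int_commute split: bool.split)

lemma indep_vars_source_blocks:
  assumes B: "disjoint_family_on B I"
    and X: "\<And>i. i \<in> I \<Longrightarrow> X i \<in> measurable (source_sigma (B i)) (S i)"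
  shows "indep_vars S X I"
  unfolding indep_vars_def
proof
  show "\<forall>i\<in>I. random_variable (S i) (X i)"
    using X by (auto intro: measurable_source_sigmaD)
  show "indep_sets (\<lambda>i. sigma_sets (space M) {X i -` A \<inter> space M |A. A \<in> sets (S i)}) I"
  proof (rule indep_sets_mono_sets[OF indep_sets_source_blocks[OF B]])
    fix i assume "i \<in> I"
    then have "{X i -` A \<inter> space M |A. A \<in> sets (S i)} \<subseteq> sets (source_sigma (B i))"
      using X measurable_sets[of "X i" "source_sigma (B i)" "S i"] by auto
    then show "sigma_sets (space M) {X i -` A \<inter> space M |A. A \<in> sets (S i)} \<subseteq> sets (source_sigma (B i))"
      using sets.sigma_sets_subset[of _ "source_sigma (B i)"] by simp
  qed
qed

lemma indep_var_source_blocks: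
  assumes "B1 \<inter> B2 = {}" "X \<in> measurable (source_sigma B1) S" "Y \<in> measurable (source_sigma B2) T"
  shows "indep_var S X T Y"
  unfolding indep_var_def
  using assms by (intro indep_vars_source_blocks[where B="case_bool B1 B2"])
    (auto simp: disjoint_family_on_def split: bool.split)

lemma walk_step_measurable_source:
  "SE l n \<in> B \<Longrightarrow> SJ l n \<in> B \<Longrightarrow>
    (\<lambda>\<omega>. walk E J l \<omega> n) \<in> measurable (source_sigma B) (borel \<Otimes>\<^sub>M count_space UNIV)"
  unfolding walk_def by (intro measurable_Pair E_measurable_source J_measurable_source)

lemma walk_measurable_source:
  assumes "walk_sources l \<subseteq> B"
  shows "walk E J l \<in> measurable (source_sigma B) path_space"
proof -
  have "(\<lambda>\<omega> n. walk E J l \<omega> n) \<in> measurable (source_sigma B) path_space"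
    using assms by (intro measurable_PiM_single' walk_step_measurable_source)
      (auto simp: walk_sources_def space_pair_measure)
  then show ?thesis by simp
qed

lemma walk_measurable[measurable]: "walk E J l \<in> measurable M path_space"
  using walk_measurable_source[OF subset_UNIV] by (rule measurable_source_sigmaD)

lemma distr_E: "distr M borel (E l n) = density lborel (exponential_density 1)"
proof -
  have "distr M borel (E l n) = distr M lborel (E l n)" by (rule distr_cong) auto
  also have "\<dots> = density lborel (exponential_density 1)"
    using E_distributed by (simp add: distributed_distr_eq_density)
  finally show ?thesis .
qed

lemma distr_J_label_indep:
  "distr M (count_space UNIV) (J l n) = distr M (count_space UNIV) (J l' n)"
proof (rule measure_eqI_countable)
  fix z :: "int^'d"
  have "emeasure (distr M (count_space UNIV) (J l n)) {z} = ennreal (jump_prob pp pm z)" for l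
  proof -
    have "emeasure (distr M (count_space UNIV) (J l n)) {z} = emeasure M {\<omega>\<in>space M. J l n \<omega> = z}"
      by (subst emeasure_distr) (auto intro!: arg_cong[where f="emeasure M"])
    then show ?thesis by (simp add: emeasure_eq_measure prob_J_eq)
  qed
  then show "emeasure (distr M (count_space UNIV) (J l n)) {z} = emeasure (distr M (count_space UNIV) (J l' n)) {z}"
    by simp
qed auto

lemma distr_walk_step:
  "distr M (borel \<Otimes>\<^sub>M count_space UNIV) (\<lambda>\<omega>. walk E J l \<omega> n) =
    distr M borel (E l n) \<Otimes>\<^sub>M distr M (count_space UNIV) (J l n)"
proof (rule pair_measure_eqI[symmetric])
  fix A :: "real set" and B :: "(int^'d) set"
  assume "A \<in> sets (distr M borel (E l n))" "B \<in> sets (distr M (count_space UNIV) (J l n))"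
  then have A: "A \<in> sets borel" by simp
  have EA: "E l n -` A \<inter> space M \<in> sets (source_sigma {SE l n})"
    using measurable_sets[OF E_measurable_source A] by simp
  have JB: "J l n -` B \<inter> space M \<in> sets (source_sigma {SJ l n})"
    using measurable_sets[OF J_measurable_source, of l n "{SJ l n}" B] by simp
  have "(\<lambda>\<omega>. walk E J l \<omega> n) -` (A \<times> B) \<inter> space M = (E l n -` A \<inter> space M) \<inter> (J l n -` B \<inter> space M)"
    by (auto simp: walk_def)
  then show "emeasure (distr M borel (E l n)) A * emeasure (distr M (count_space UNIV) (J l n)) B =
      emeasure (distr M (borel \<Otimes>\<^sub>M count_space UNIV) (\<lambda>\<omega>. walk E J l \<omega> n)) (A \<times> B)"
    using A prob_Int_source_blocks[OF _ EA JB]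
    by (simp add: emeasure_distr emeasure_eq_measure walk_def ennreal_mult)
next
  show "sets (distr M borel (E l n) \<Otimes>\<^sub>M distr M (count_space UNIV) (J l n)) =
      sets (distr M (borel \<Otimes>\<^sub>M count_space UNIV) (\<lambda>\<omega>. walk E J l \<omega> n))"
    using sets_pair_measure_cong[of "distr M borel (E l n)" borel
        "distr M (count_space UNIV) (J l n)" "count_space UNIV"] by simp
qed (auto intro!: prob_space_imp_sigma_finite prob_space_distr)

lemma distr_walk:
  "distr M path_space (walk E J l) =
    (\<Pi>\<^sub>M n\<in>UNIV. distr M borel (E l n) \<Otimes>\<^sub>M distr M (count_space UNIV) (J l n))"
proof -
  have "indep_vars (\<lambda>_. borel \<Otimes>\<^sub>M count_space UNIV) (\<lambda>n \<omega>. walk E J l \<omega> n) UNIV"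
    by (rule indep_vars_source_blocks[where B="\<lambda>n. {SE l n, SJ l n}"])
      (auto simp: disjoint_family_on_def intro: walk_step_measurable_source)
  then have "distr M path_space (\<lambda>\<omega>. \<lambda>n\<in>UNIV. walk E J l \<omega> n) =
      (\<Pi>\<^sub>M n\<in>UNIV. distr M (borel \<Otimes>\<^sub>M count_space UNIV) (\<lambda>\<omega>. walk E J l \<omega> n))"
    by (subst indep_vars_iff_distr_eq_PiM[symmetric]) (auto simp: walk_def)
  then show ?thesis by (simp add: distr_walk_step restrict_UNIV)
qed

lemma prob_walk_label_indep:
  assumes [measurable]: "Measurable.pred path_space G"
  shows "prob {\<omega>\<in>space M. G (walk E J l \<omega>)} = prob {\<omega>\<in>space M. G (walk E J l' \<omega>)}"
proof -
  have "prob {\<omega>\<in>space M. G (walk E J l \<omega>)} = measure (distr M path_space (walk E J l)) {w\<in>space path_space. G w}"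
    for l
    by (subst measure_distr) (auto intro!: arg_cong[where f=prob] dest: measurable_space[OF walk_measurable])
  then show ?thesis
    by (simp add: distr_walk distr_E distr_J_label_indep[of l _ l'])
qed

section \<open>Probability of a relay move\<close>

lemma sets_source_before_jump:
  assumes "\<And>j. j < n \<Longrightarrow> SE l j \<in> B"
  shows "{\<omega>\<in>space M. \<forall>k<n. jump_time E l k \<omega> \<le> a} \<in> sets (source_sigma B)"
  using assms
proof (induction n)
  case 0
  show ?case using sets.top[of "source_sigma B"] by simp
next
  case (Suc n)
  have "(\<lambda>\<omega>. jump_time E l n \<omega>) \<in> borel_measurable (source_sigma B)"
    using Suc.prems by (rule jump_time_measurable_source) auto
  then have last: "{\<omega>\<in>space M. jump_time E l n \<omega> \<le> a} \<in> sets (source_sigma B)"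
    unfolding borel_measurable_iff_le space_source_sigma by blast
  have before: "{\<omega>\<in>space M. \<forall>k<n. jump_time E l k \<omega> \<le> a} \<in> sets (source_sigma B)"
    using Suc.prems by (intro Suc.IH) simp
  have "{\<omega>\<in>space M. \<forall>k<Suc n. jump_time E l k \<omega> \<le> a} =
      {\<omega>\<in>space M. \<forall>k<n. jump_time E l k \<omega> \<le> a} \<inter> {\<omega>\<in>space M. jump_time E l n \<omega> \<le> a}"
    by (auto simp: less_Suc_eq)
  then show ?case using sets.Int[OF before last] by (simp only:)
qed

lemma sets_source_jump_time_window:
  assumes "\<And>j. j \<le> n \<Longrightarrow> SE l j \<in> B"
  shows "{\<omega>\<in>space M. (\<forall>k<n. jump_time E l k \<omega> \<le> a) \<and> a + s < jump_time E l n \<omega> \<and> jump_time E l n \<omega> \<le> a + t}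
    \<in> sets (source_sigma B)"
proof -
  have jump_time: "(\<lambda>\<omega>. jump_time E l n \<omega>) \<in> borel_measurable (source_sigma B)"
    using assms by (rule jump_time_measurable_source)
  then have "{\<omega>\<in>space M. a + s < jump_time E l n \<omega>} \<in> sets (source_sigma B)"
    unfolding borel_measurable_iff_greater space_source_sigma by blast
  moreover have "{\<omega>\<in>space M. jump_time E l n \<omega> \<le> a + t} \<in> sets (source_sigma B)"
    using jump_time unfolding borel_measurable_iff_le space_source_sigma by blast
  moreover have "{\<omega>\<in>space M. \<forall>k<n. jump_time E l k \<omega> \<le> a} \<in> sets (source_sigma B)"
    using assms by (intro sets_source_before_jump) auto
  ultimately have "{\<omega>\<in>space M. \<forall>k<n. jump_time E l k \<omega> \<le> a} \<inter> {\<omega>\<in>space M. a + s < jump_time E l n \<omega>} \<inter>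
      {\<omega>\<in>space M. jump_time E l n \<omega> \<le> a + t} \<in> sets (source_sigma B)"
    by (intro sets.Int)
  also have "{\<omega>\<in>space M. \<forall>k<n. jump_time E l k \<omega> \<le> a} \<inter> {\<omega>\<in>space M. a + s < jump_time E l n \<omega>} \<inter>
      {\<omega>\<in>space M. jump_time E l n \<omega> \<le> a + t} =
      {\<omega>\<in>space M. (\<forall>k<n. jump_time E l k \<omega> \<le> a) \<and> a + s < jump_time E l n \<omega> \<and> jump_time E l n \<omega> \<le> a + t}"
    by blast
  finally show ?thesis .
qed

lemma prob_jump_time_window:
  assumes a: "0 \<le> a" and st: "0 \<le> s" "s \<le> t"
  shows "prob {\<omega>\<in>space M. (\<forall>k<n. jump_time E l k \<omega> \<le> a) \<and> a + s < jump_time E l n \<omega> \<and> jump_time E l n \<omega> \<le> a + t}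
    = (exp (- s) - exp (- t)) * prob {\<omega>\<in>space M. (\<forall>k<n. jump_time E l k \<omega> \<le> a) \<and> a < jump_time E l n \<omega>}"
proof -
  define P where "P \<omega> \<longleftrightarrow> (\<forall>k<n. jump_time E l k \<omega> \<le> a)" for \<omega>
  \<comment> \<open>on P, U is the time elapsed between the last jump before a and a\<close>
  define U where "U \<omega> = (if P \<omega> then a - (\<Sum>j<n. E l j \<omega>) else -1)" for \<omega>
  let ?B = "SE l ` {..<n}"
  have "{\<omega>\<in>space (source_sigma ?B). P \<omega>} \<in> sets (source_sigma ?B)"
    unfolding P_def space_source_sigma by (rule sets_source_before_jump) auto
  then have U: "U \<in> borel_measurable (source_sigma ?B)"
    unfolding U_def
    by (intro measurable_If borel_measurable_diff borel_measurable_sum E_measurable_source measurable_const) auto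
  have UE: "indep_var borel U borel (E l n)"
    by (rule indep_var_source_blocks[OF _ U E_measurable_source[of l n "{SE l n}"]]) auto
  have U_nonneg: "0 \<le> U \<omega>" if "P \<omega>" for \<omega>
  proof (cases n)
    case (Suc m)
    then have "jump_time E l m \<omega> \<le> a" using that by (simp add: P_def)
    then show ?thesis using that Suc by (simp add: U_def jump_time_def lessThan_Suc_atMost)
  qed (use that a in \<open>simp add: U_def\<close>)
  have jump_time_split: "jump_time E l n \<omega> = (\<Sum>j<n. E l j \<omega>) + E l n \<omega>" for \<omega>
    by (simp add: jump_time_def lessThan_Suc_atMost[symmetric])
  have "{\<omega>\<in>space M. P \<omega> \<and> a + s < jump_time E l n \<omega> \<and> jump_time E l n \<omega> \<le> a + t}
      = {\<omega>\<in>space M. 0 \<le> U \<omega> \<and> U \<omega> + s < E l n \<omega> \<and> E l n \<omega> \<le> U \<omega> + t}"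
    "{\<omega>\<in>space M. P \<omega> \<and> a < jump_time E l n \<omega>} = {\<omega>\<in>space M. 0 \<le> U \<omega> \<and> U \<omega> < E l n \<omega>}"
    using U_nonneg by (auto simp: U_def jump_time_split)
  then show ?thesis
    using prob_exponential_window_after_indep[OF E_distributed _ UE st] by (simp add: P_def)
qed

lemma prob_relay_at:
  assumes a: "0 \<le> a"
  shows "prob {\<omega>\<in>space M. relay_at e a (walk E J l \<omega>) n} = relay_const (jump_prob pp pm e) *
    prob {\<omega>\<in>space M. (\<forall>k<n. jump_time E l k \<omega> \<le> a) \<and> a < jump_time E l n \<omega>}"
proof -
  define B where "B = SE l ` {..n}"
  define W where "W = {\<omega>\<in>space M. (\<forall>k<n. jump_time E l k \<omega> \<le> a) \<and>
    a + 1/10 < jump_time E l n \<omega> \<and> jump_time E l n \<omega> \<le> a + 1/5}"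
  define Je where "Je = J l n -` {e} \<inter> space M"
  define Wait where "Wait = {\<omega>\<in>space M. 1/5 < E l (Suc n) \<omega>}"
  have W: "W \<in> sets (source_sigma B)"
    unfolding W_def by (rule sets_source_jump_time_window) (auto simp: B_def)
  have Je: "Je \<in> sets (source_sigma {SJ l n})"
    using measurable_sets[OF J_measurable_source[of l n "{SJ l n}"], of "{e}"] by (simp add: Je_def)
  have Wait: "Wait \<in> sets (source_sigma {SE l (Suc n)})"
    using E_measurable_source[of l "Suc n" "{SE l (Suc n)}"]
    unfolding Wait_def borel_measurable_iff_greater space_source_sigma by blast
  have "W \<inter> Je \<in> sets (source_sigma (B \<union> {SJ l n}))"
    using W Je sets_source_sigma_mono[of B "B \<union> {SJ l n}"] sets_source_sigma_mono[of "{SJ l n}" "B \<union> {SJ l n}"]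
    by auto
  then have "prob (W \<inter> Je \<inter> Wait) = prob (W \<inter> Je) * prob Wait"
    using Wait by (intro prob_Int_source_blocks[of "B \<union> {SJ l n}" "{SE l (Suc n)}"]) (auto simp: B_def)
  also have "prob (W \<inter> Je) = prob W * prob Je"
    using W Je by (intro prob_Int_source_blocks[of B "{SJ l n}"]) (auto simp: B_def)
  finally have "prob (W \<inter> Je \<inter> Wait) = prob W * prob Je * prob Wait" .
  moreover have "{\<omega>\<in>space M. relay_at e a (walk E J l \<omega>) n} = W \<inter> Je \<inter> Wait"
    by (auto simp: relay_at_def W_def Je_def Wait_def)
  moreover have "prob Je = jump_prob pp pm e"
    using prob_J_eq[of l n e] by (simp add: Je_def vimage_def Int_def conj_commute)
  moreover have "prob Wait = exp (- 1/5)"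
    using exponential_distributedD_gt[OF E_distributed, of "1/5"] by (simp add: Wait_def)
  moreover have "prob W = (exp (- 1/10) - exp (- 1/5)) *
      prob {\<omega>\<in>space M. (\<forall>k<n. jump_time E l k \<omega> \<le> a) \<and> a < jump_time E l n \<omega>}"
    unfolding W_def using prob_jump_time_window[OF a, of "1/10" "1/5"] by simp
  ultimately show ?thesis by (simp add: relay_const_def ac_simps)
qed

lemma prob_all_holds_below:
  assumes a: "0 \<le> a"
  shows "prob {\<omega>\<in>space M. \<forall>k\<le>n. E l k \<omega> \<le> a} = (1 - exp (- a)) ^ Suc n"
proof -
  have "{\<omega>\<in>space M. E l k \<omega> \<le> a} \<in> sets (source_sigma {SE l k})" for k
    using E_measurable_source[of l k "{SE l k}"] unfolding borel_measurable_iff_le by simp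
  then have "prob (\<Inter>k\<in>{..n}. {\<omega>\<in>space M. E l k \<omega> \<le> a}) = (\<Prod>k\<in>{..n}. prob {\<omega>\<in>space M. E l k \<omega> \<le> a})"
    by (intro prob_INT_source_blocks[where B="\<lambda>k. {SE l k}"]) (auto simp: disjoint_family_on_def)
  moreover have "(\<Inter>k\<in>{..n}. {\<omega>\<in>space M. E l k \<omega> \<le> a}) = {\<omega>\<in>space M. \<forall>k\<le>n. E l k \<omega> \<le> a}" by auto
  ultimately show ?thesis
    using exponential_distributedD_le[OF E_distributed a] by simp
qed

lemma prob_all_jump_times_below_le:
  assumes a: "0 \<le> a"
  shows "prob {\<omega>\<in>space M. \<forall>k\<le>n. jump_time E l k \<omega> \<le> a} \<le> (1 - exp (- a)) ^ Suc n"
proof -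
  have "prob {\<omega>\<in>space M. \<forall>k\<le>n. jump_time E l k \<omega> \<le> a} \<le> prob {\<omega>\<in>space M. \<forall>k\<le>n. E l k \<omega> \<le> a}"
  proof (rule finite_measure_mono_AE)
    show "AE \<omega> in M. \<omega> \<in> {\<omega>\<in>space M. \<forall>k\<le>n. jump_time E l k \<omega> \<le> a} \<longrightarrow>
        \<omega> \<in> {\<omega>\<in>space M. \<forall>k\<le>n. E l k \<omega> \<le> a}"
      using AE_E_pos[of l]
    proof eventually_elim
      case (elim \<omega>)
      have "E l k \<omega> \<le> jump_time E l k \<omega>" for k
        unfolding jump_time_def using elim by (intro member_le_sum) (auto intro: less_imp_le)
      then show ?case by (auto intro: order_trans)
    qed
  qed measurable
  then show ?thesis using prob_all_holds_below[OF a] by simp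
qed

lemma first_jump_after_bounded_index:
  assumes a: "0 \<le> a"
  obtains n0 where
    "1/2 \<le> (\<Sum>n\<le>n0. prob {\<omega>\<in>space M. (\<forall>k<n. jump_time E l k \<omega> \<le> a) \<and> a < jump_time E l n \<omega>})"
proof -
  note jump_time_measurable[measurable]
  define q where "q = 1 - exp (- a)"
  have q: "0 \<le> q" "q < 1" using a by (auto simp: q_def)
  obtain n0 where "q ^ n0 < 1/2" using real_arch_pow_inv[of "1/2" q] q by auto
  moreover have "q ^ Suc n0 \<le> q ^ n0" using q by (simp add: mult_left_le_one_le)
  ultimately have qn0: "q ^ Suc n0 \<le> 1/2" by simp
  define B where "B n = {\<omega>\<in>space M. (\<forall>k<n. jump_time E l k \<omega> \<le> a) \<and> a < jump_time E l n \<omega>}" for n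
  define G where "G = {\<omega>\<in>space M. \<forall>k\<le>n0. jump_time E l k \<omega> \<le> a}"
  have B_ev: "B n \<in> events" for n unfolding B_def by measurable
  have G_ev: "G \<in> events" unfolding G_def by measurable
  have "disjoint_family B"
    using disjoint_family_first_exceeding[of "space M" "\<lambda>\<omega> k. jump_time E l k \<omega>" a]
    unfolding B_def[abs_def] .
  then have "(\<Sum>n\<le>n0. prob (B n)) = prob (\<Union>n\<in>{..n0}. B n)"
    using B_ev by (intro finite_measure_finite_Union[symmetric]) (auto intro: disjoint_family_on_mono)
  also have "(\<Union>n\<in>{..n0}. B n) = space M - G"
    unfolding B_def UN_first_exceeding by (auto simp: G_def not_le)
  also have "prob (space M - G) = 1 - prob G" using G_ev by (rule prob_compl)
  finally have "1/2 \<le> (\<Sum>n\<le>n0. prob (B n))"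
    using prob_all_jump_times_below_le[OF a, of n0 l] qn0 by (simp add: G_def q_def)
  then show ?thesis by (intro that[of n0]) (simp add: B_def)
qed

lemma prob_relays_ge:
  assumes a: "0 \<le> a"
  shows "relay_const (jump_prob pp pm e) / 2 \<le> prob {\<omega>\<in>space M. \<exists>z. relays e a z (walk E J l \<omega>)}"
proof -
  define \<kappa> where "\<kappa> = relay_const (jump_prob pp pm e)"
  have "0 \<le> jump_prob pp pm e" using prob_J_eq[of l 0 e] measure_nonneg by metis
  then have \<kappa>: "0 \<le> \<kappa>" by (simp add: \<kappa>_def relay_const_def)
  define B where "B n = {\<omega>\<in>space M. (\<forall>k<n. jump_time E l k \<omega> \<le> a) \<and> a < jump_time E l n \<omega>}" for n
  define W where "W n = {\<omega>\<in>space M. relay_at e a (walk E J l \<omega>) n}" for n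
  obtain n0 where n0: "1/2 \<le> (\<Sum>n\<le>n0. prob (B n))"
    using first_jump_after_bounded_index[OF a] unfolding B_def by blast
  have W_ev: "W n \<in> events" for n unfolding W_def by measurable
  have "W n \<subseteq> B n" for n by (auto simp: W_def B_def relay_at_def)
  then have "disjoint_family W"
    using disjoint_family_first_exceeding[of "space M" "\<lambda>\<omega> k. jump_time E l k \<omega>" a]
    unfolding B_def disjoint_family_on_def by blast
  then have "prob (\<Union>n\<in>{..n0}. W n) = (\<Sum>n\<le>n0. prob (W n))"
    using W_ev by (intro finite_measure_finite_Union) (auto intro: disjoint_family_on_mono)
  also have "\<dots> = \<kappa> * (\<Sum>n\<le>n0. prob (B n))"
    by (simp add: W_def B_def prob_relay_at[OF a] \<kappa>_def sum_distrib_left)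
  finally have "\<kappa> / 2 \<le> prob (\<Union>n\<in>{..n0}. W n)"
    using n0 \<kappa> by (metis mult_left_mono mult.right_neutral times_divide_eq_right)
  also have "\<dots> \<le> prob {\<omega>\<in>space M. \<exists>z. relays e a z (walk E J l \<omega>)}"
  proof (rule finite_measure_mono_AE)
    show "AE \<omega> in M. \<omega> \<in> (\<Union>n\<in>{..n0}. W n) \<longrightarrow> \<omega> \<in> {\<omega>\<in>space M. \<exists>z. relays e a z (walk E J l \<omega>)}"
      using AE_E_pos[of l] by eventually_elim (auto simp: W_def relays_def)
  qed measurable
  finally show ?thesis by (simp add: \<kappa>_def)
qed

section \<open>Poisson thinning over the sites\<close>

lemma site_avoids_sets_source:
  assumes [measurable]: "Measurable.pred path_space G"
  shows "{\<omega>\<in>space M. \<forall>k<N y \<omega>. \<not> G (walk E J (Some (y, k)) \<omega>)} \<in> sets (source_sigma (site_sources y))"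
proof -
  have [measurable]: "N y \<in> measurable (source_sigma (site_sources y)) (count_space UNIV)"
    by (rule N_measurable_source) (simp add: site_sources_def)
  have [measurable]: "walk E J (Some (y, k)) \<in> measurable (source_sigma (site_sources y)) path_space" for k
    by (rule walk_measurable_source) (auto simp: site_sources_def)
  have "{\<omega>\<in>space (source_sigma (site_sources y)). \<forall>k<N y \<omega>. \<not> G (walk E J (Some (y, k)) \<omega>)}
      \<in> sets (source_sigma (site_sources y))"
    by measurable
  then show ?thesis by simp
qed

lemma prob_site_count_avoids:
  assumes rho: "0 < rho" and G[measurable]: "Measurable.pred path_space G"
  shows "prob {\<omega>\<in>space M. N y \<omega> = j \<and> (\<forall>k<j. \<not> G (walk E J (Some (y, k)) \<omega>))} =
    pmf (poisson_pmf rho) j * (1 - prob {\<omega>\<in>space M. G (walk E J None \<omega>)}) ^ j"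
proof -
  define I where "I = insert None (Some ` {..<j})"
  define B where "B i = (case i of None \<Rightarrow> {SN y} | Some k \<Rightarrow> walk_sources (Some (y, k)))" for i
  define A where "A i = (case i of None \<Rightarrow> {\<omega>\<in>space M. N y \<omega> = j}
    | Some k \<Rightarrow> {\<omega>\<in>space M. \<not> G (walk E J (Some (y, k)) \<omega>)})" for i
  have "disjoint_family_on B I"
    by (auto simp: disjoint_family_on_def B_def walk_sources_def I_def split: option.splits)
  moreover have "A i \<in> sets (source_sigma (B i))" for i
  proof (cases i)
    case None
    have [measurable]: "N y \<in> measurable (source_sigma {SN y}) (count_space UNIV)"
      by (rule N_measurable_source) simp
    have "{\<omega>\<in>space (source_sigma {SN y}). N y \<omega> = j} \<in> sets (source_sigma {SN y})" by measurable
    then show ?thesis by (simp add: None A_def B_def)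
  next
    case (Some k)
    let ?B = "walk_sources (Some (y, k))"
    have [measurable]: "walk E J (Some (y, k)) \<in> measurable (source_sigma ?B) path_space"
      by (rule walk_measurable_source) simp
    have "{\<omega>\<in>space (source_sigma ?B). \<not> G (walk E J (Some (y, k)) \<omega>)} \<in> sets (source_sigma ?B)"
      by measurable
    then show ?thesis by (simp add: Some A_def B_def)
  qed
  ultimately have "prob (\<Inter>i\<in>I. A i) = (\<Prod>i\<in>I. prob (A i))"
    by (intro prob_INT_source_blocks) (auto simp: I_def)
  moreover have "(\<Prod>i\<in>I. prob (A i)) = prob (A None) * (\<Prod>k<j. prob (A (Some k)))"
    unfolding I_def by (subst prod.insert) (auto simp: prod.reindex)
  moreover have "prob (A (Some k)) = 1 - prob {\<omega>\<in>space M. G (walk E J None \<omega>)}" for k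
  proof -
    have "A (Some k) = space M - {\<omega>\<in>space M. G (walk E J (Some (y, k)) \<omega>)}" by (auto simp: A_def)
    moreover have "{\<omega>\<in>space M. G (walk E J (Some (y, k)) \<omega>)} \<in> events" by measurable
    ultimately show ?thesis
      using prob_walk_label_indep[OF G, of "Some (y, k)" None] by (simp add: prob_compl)
  qed
  moreover have "(\<Inter>i\<in>I. A i) = {\<omega>\<in>space M. N y \<omega> = j \<and> (\<forall>k<j. \<not> G (walk E J (Some (y, k)) \<omega>))}"
    by (auto simp: I_def A_def)
  ultimately show ?thesis by (simp add: A_def prob_N_eq[OF rho])
qed

lemma prob_site_avoids:
  assumes rho: "0 < rho" and G[measurable]: "Measurable.pred path_space G"
  shows "prob {\<omega>\<in>space M. \<forall>k<N y \<omega>. \<not> G (walk E J (Some (y, k)) \<omega>)} =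
    exp (- (rho * prob {\<omega>\<in>space M. G (walk E J None \<omega>)}))"
proof -
  define q where "q = prob {\<omega>\<in>space M. G (walk E J None \<omega>)}"
  define D where "D j = {\<omega>\<in>space M. N y \<omega> = j \<and> (\<forall>k<j. \<not> G (walk E J (Some (y, k)) \<omega>))}" for j
  have "(\<lambda>j. prob (D j)) sums prob (\<Union>j. D j)"
    unfolding D_def by (intro measure_UNION) (auto simp: disjoint_family_on_def)
  moreover have "(\<Union>j. D j) = {\<omega>\<in>space M. \<forall>k<N y \<omega>. \<not> G (walk E J (Some (y, k)) \<omega>)}"
    by (auto simp: D_def)
  moreover have "(\<lambda>j. prob (D j)) sums exp (- (rho * q))"
    using poisson_pmf_generating_function[OF rho, of "1 - q"]
    by (simp add: D_def q_def prob_site_count_avoids[OF rho G])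
  ultimately show ?thesis by (metis sums_unique2 q_def)
qed

lemma prob_all_sites_avoid_le:
  assumes rho: "0 < rho" and G[measurable]: "\<And>y. Measurable.pred path_space (G y)"
    and c: "c < prob {\<omega>\<in>space M. \<exists>y. G y (walk E J None \<omega>)}"
  shows "prob {\<omega>\<in>space M. \<forall>y k. k < N y \<omega> \<longrightarrow> \<not> G y (walk E J (Some (y, k)) \<omega>)} \<le> exp (- (rho * c))"
proof -
  define H where "H y = {\<omega>\<in>space M. G y (walk E J None \<omega>)}" for y
  define S where "S y = {\<omega>\<in>space M. \<forall>k<N y \<omega>. \<not> G y (walk E J (Some (y, k)) \<omega>)}" for y
  have H_ev: "H y \<in> events" for y unfolding H_def by measurable
  have "(\<Union>y. H y) = {\<omega>\<in>space M. \<exists>y. G y (walk E J None \<omega>)}" by (auto simp: H_def)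
  then have "c < prob (\<Union>y. H y)" using c by simp
  \<comment> \<open>independence across sites is only usable for finitely many of them\<close>
  then obtain F where F: "finite F" and cF: "c < prob (\<Union>y\<in>F. H y)"
    using finite_subfamily_measure_gt[of UNIV H c, OF countableI_type] H_ev by blast
  have sumF: "c < (\<Sum>y\<in>F. prob (H y))"
    using cF measure_UNION_le[OF F, of H, OF H_ev] by linarith
  show ?thesis
  proof (cases "F = {}")
    case True
    then have "1 \<le> exp (- (rho * c))" using sumF rho by (simp add: mult_pos_neg less_imp_le)
    then show ?thesis using prob_le_1 by (rule order_trans[rotated])
  next
    case False
    have "prob {\<omega>\<in>space M. \<forall>y k. k < N y \<omega> \<longrightarrow> \<not> G y (walk E J (Some (y, k)) \<omega>)} \<le> prob (\<Inter>y\<in>F. S y)"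
    proof (rule finite_measure_mono)
      show "(\<Inter>y\<in>F. S y) \<in> events"
        using F False site_avoids_sets_source[OF G] sets_source_sigma_subset by (auto simp: S_def)
    qed (auto simp: S_def)
    also have "\<dots> = (\<Prod>y\<in>F. prob (S y))"
      using F False site_avoids_sets_source[OF G]
      by (intro prob_INT_source_blocks[where B=site_sources])
        (auto simp: S_def disjoint_family_on_def site_sources_def walk_sources_def)
    also have "\<dots> = (\<Prod>y\<in>F. exp (- (rho * prob (H y))))"
      by (simp add: S_def H_def prob_site_avoids[OF rho G])
    also have "\<dots> = exp (- (rho * (\<Sum>y\<in>F. prob (H y))))"
      using F by (simp add: exp_sum[symmetric] sum_negf sum_distrib_left)
    also have "\<dots> \<le> exp (- (rho * c))" using sumF rho by simp
    finally show ?thesis .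
  qed
qed

lemma prob_no_relay_le:
  assumes rho: "0 < rho" and e: "0 < jump_prob pp pm e" and a: "0 \<le> a"
  shows "prob {\<omega>\<in>space M. \<forall>y k. k < N y \<omega> \<longrightarrow> \<not> relays e a (x - y) (walk E J (Some (y, k)) \<omega>)}
    \<le> exp (- (rho * (relay_const (jump_prob pp pm e) / 4)))"
proof -
  define \<kappa> where "\<kappa> = relay_const (jump_prob pp pm e)"
  have "\<kappa> / 4 < \<kappa> / 2" using e by (simp add: \<kappa>_def relay_const_def)
  also have "\<kappa> / 2 \<le> prob {\<omega>\<in>space M. \<exists>z. relays e a z (walk E J None \<omega>)}"
    unfolding \<kappa>_def by (rule prob_relays_ge[OF a])
  also have "{\<omega>\<in>space M. \<exists>z. relays e a z (walk E J None \<omega>)} =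
      {\<omega>\<in>space M. \<exists>y. relays e a (x - y) (walk E J None \<omega>)}"
  proof (rule Collect_cong)
    fix \<omega>
    have "x - (x - z) = z" for z by simp
    then show "(\<omega> \<in> space M \<and> (\<exists>z. relays e a z (walk E J None \<omega>))) =
        (\<omega> \<in> space M \<and> (\<exists>y. relays e a (x - y) (walk E J None \<omega>)))"
      by metis
  qed
  finally show ?thesis
    unfolding \<kappa>_def using rho by (intro prob_all_sites_avoid_le) auto
qed

lemma rfront_lag_event_le:
  fixes L :: nat and i0 :: 'd
  assumes L: "1 \<le> L" and rho: "rho = sqrt (real L)" and pp: "0 < pp i0"
  shows "\<exists>A\<in>events. {\<omega>\<in>space M. rfront i0 N E J (real L) \<omega> < ereal (8 * real L)} \<subseteq> A \<and>
    prob A \<le> 10 * real L * exp (- (sqrt (real L) * (relay_const (pp i0) / 4)))"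
proof -
  define K where "K = 10 * L - 2"
  define NG where "NG m = {\<omega>\<in>space M. \<forall>y k. k < N y \<omega> \<longrightarrow>
    \<not> relays (axis i0 1) (real m / 10) (axis i0 (int m) - y) (walk E J (Some (y, k)) \<omega>)}" for m
  define A where "A = (\<Union>m<K. NG m)"
  have NG_ev: "NG m \<in> events" for m unfolding NG_def by measurable
  have A_ev: "A \<in> events" unfolding A_def using NG_ev by auto
  have "prob A \<le> (\<Sum>m<K. prob (NG m))"
    unfolding A_def using NG_ev by (intro measure_UNION_le) auto
  also have "\<dots> \<le> (\<Sum>m<K. exp (- (rho * (relay_const (pp i0) / 4))))"
    using L pp rho unfolding NG_def
    by (intro sum_mono prob_no_relay_le[of "axis i0 1", unfolded jump_prob_axis]) auto
  also have "\<dots> = real K * exp (- (sqrt (real L) * (relay_const (pp i0) / 4)))"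
    by (simp add: rho)
  also have "\<dots> \<le> 10 * real L * exp (- (sqrt (real L) * (relay_const (pp i0) / 4)))"
    by (intro mult_right_mono) (auto simp: K_def)
  finally have "prob A \<le> 10 * real L * exp (- (sqrt (real L) * (relay_const (pp i0) / 4)))" .
  moreover have "{\<omega>\<in>space M. rfront i0 N E J (real L) \<omega> < ereal (8 * real L)} \<subseteq> A"
  proof (intro subsetI CollectI; elim CollectE conjE)
    fix \<omega> assume \<omega>: "\<omega> \<in> space M" and lag: "rfront i0 N E J (real L) \<omega> < ereal (8 * real L)"
    show "\<omega> \<in> A"
    proof (rule ccontr)
      assume "\<omega> \<notin> A"
      then have "ereal (real K) \<le> rfront i0 N E J ((real K + 2) / 10) \<omega>"
        using \<omega> L by (intro rfront_ge_of_relay_chain) (auto simp: A_def NG_def K_def)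
      moreover have "(real K + 2) / 10 = real L" "8 * real L \<le> real K"
        using L by (auto simp: K_def of_nat_diff)
      ultimately have "ereal (8 * real L) \<le> rfront i0 N E J (real L) \<omega>"
        by (metis ereal_less_eq(3) order_trans)
      then show False using lag by simp
    qed
  qed
  ultimately show ?thesis using A_ev by blast
qed

end

lemma exp_decay_le_max_const:
  fixes \<kappa> x y :: real
  assumes \<kappa>: "0 < \<kappa>" and "0 \<le> x" "0 \<le> y"
  shows "10 * x * exp (- (y * (\<kappa> / 4))) \<le> max 10 (4 / \<kappa>) * x * exp (- y / max 10 (4 / \<kappa>))"
proof (rule mult_mono)
  define c where "c = max 10 (4 / \<kappa>)"
  have c: "0 < c" "4 / \<kappa> \<le> c" by (auto simp: c_def)
  then have "1 / c \<le> \<kappa> / 4" using \<kappa> by (simp add: field_simps)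
  then have "y * (1 / c) \<le> y * (\<kappa> / 4)" using assms by (intro mult_left_mono) auto
  then show "exp (- (y * (\<kappa> / 4))) \<le> exp (- y / max 10 (4 / \<kappa>))" by (simp add: c_def)
qed (use assms in \<open>auto intro: mult_right_mono\<close>)

theorem lemma5p3:
  fixes pp pm :: "'d::finite \<Rightarrow> real" and i0 :: 'd
  assumes "\<forall>i. 0 < pp i \<and> pp i \<le> pm i \<and> pm i < 1"
    and "(\<Sum>i\<in>UNIV. pp i + pm i) = 1"
  shows "\<exists>c>0. \<forall>L::nat. L \<ge> 1 \<longrightarrow>
    (\<forall>(M::'a measure) N E J. frog_model M pp pm (sqrt (real L)) N E J \<longrightarrow>
       (\<exists>A\<in>sets M. {\<omega>\<in>space M. rfront i0 N E J (real L) \<omega> < ereal (8 * real L)} \<subseteq> A \<and>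
          measure M A \<le> c * real L * exp (- sqrt (real L) / c)))"
proof -
  have pp: "0 < pp i0" using assms(1) by blast
  define \<kappa> where "\<kappa> = relay_const (pp i0)"
  have \<kappa>: "0 < \<kappa>" using pp by (simp add: \<kappa>_def relay_const_def)
  show ?thesis
  proof (intro exI[of _ "max 10 (4 / \<kappa>)"] conjI allI impI)
    fix L :: nat and M :: "'a measure" and N E J
    assume L: "1 \<le> L" and model: "frog_model M pp pm (sqrt (real L)) N E J"
    interpret frog M pp pm "sqrt (real L)" N E J by (rule frog.intro[OF model])
    have "10 * real L * exp (- (sqrt (real L) * (\<kappa> / 4))) \<le>
        max 10 (4 / \<kappa>) * real L * exp (- sqrt (real L) / max 10 (4 / \<kappa>))"
      using exp_decay_le_max_const[OF \<kappa>, of "real L" "sqrt (real L)"] by simp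
    then show "\<exists>A\<in>sets M. {\<omega>\<in>space M. rfront i0 N E J (real L) \<omega> < ereal (8 * real L)} \<subseteq> A \<and>
        measure M A \<le> max 10 (4 / \<kappa>) * real L * exp (- sqrt (real L) / max 10 (4 / \<kappa>))"
      using rfront_lag_event_le[OF L refl pp] unfolding \<kappa>_def by (meson order_trans)
  qed simp
qed

end
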